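(* Let $X$ be a permutation group on a set $U$ and $Y$ a permutation group on a set $W$, and let $G=X\times Y$ act on $U\times W$ in product action. Let $\Gamma$ be a $G$-arc-transitive digraph with vertex set $U\times W$. Then $\Gamma\cong\Gamma_1\times\Gamma_2$ for some $X$-arc-transitive digraph $\Gamma_1$ and some $Y$-arc-transitive digraph $\Gamma_2$.
   Context: A digraph is a pair $(V,A)$ with $A\subseteq V\times V$. For a group $H$ acting on the vertex set of a digraph $\Delta$ by automorphisms, $\Delta$ is $H$-arc-transitive if $H$ is transitive on the arc set of $\Delta$. Product action: $(x,y)\in X\times Y$ sends $(u,w)$ to $(u^x,w^y)$. The tensor product $\Gamma_1\times\Gamma_2$ of $\Gamma_1=(V_1,A_1)$ and $\Gamma_2=(V_2,A_2)$ has vertex set $V_1\times V_2$, with $(u_1,u_2)$ pointing to $(v_1,v_2)$ iff $(u_1,v_1)\in A_1$ and $(u_2,v_2)\in A_2$. *)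

theory Defs
  imports "HOL-Algebra.Bij"
begin

type_synonym 'a digraph = "'a set \<times> ('a \<times> 'a) set"

definition is_digraph :: "'a digraph \<Rightarrow> bool" where
  "is_digraph D \<longleftrightarrow> snd D \<subseteq> fst D \<times> fst D"

definition perm_group :: "'a set \<Rightarrow> ('a \<Rightarrow> 'a) set \<Rightarrow> bool" where
  "perm_group U X \<longleftrightarrow> subgroup X (BijGroup U)"

definition arc_transitive :: "('a \<Rightarrow> 'a) set \<Rightarrow> 'a digraph \<Rightarrow> bool" where
  "arc_transitive H D \<longleftrightarrow>
     (\<forall>h\<in>H. bij_betw h (fst D) (fst D) \<and>
        (\<forall>u\<in>fst D. \<forall>v\<in>fst D. (u, v) \<in> snd D \<longleftrightarrow> (h u, h v) \<in> snd D)) \<and>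
     (\<forall>a\<in>snd D. \<forall>b\<in>snd D. \<exists>h\<in>H. (h (fst a), h (snd a)) = b)"

definition prod_action :: "('u \<Rightarrow> 'u) set \<Rightarrow> ('w \<Rightarrow> 'w) set \<Rightarrow> ('u \<times> 'w \<Rightarrow> 'u \<times> 'w) set" where
  "prod_action X Y = {(\<lambda>(u, w). (x u, y w)) | x y. x \<in> X \<and> y \<in> Y}"

definition tensor :: "'u digraph \<Rightarrow> 'w digraph \<Rightarrow> ('u \<times> 'w) digraph" where
  "tensor D1 D2 = (fst D1 \<times> fst D2,
     {((u1, u2), (v1, v2)) | u1 u2 v1 v2. (u1, v1) \<in> snd D1 \<and> (u2, v2) \<in> snd D2})"

definition digraph_iso :: "'a digraph \<Rightarrow> 'b digraph \<Rightarrow> bool" where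
  "digraph_iso D1 D2 \<longleftrightarrow> (\<exists>f. bij_betw f (fst D1) (fst D2) \<and>
     (\<forall>u\<in>fst D1. \<forall>v\<in>fst D1. (u, v) \<in> snd D1 \<longleftrightarrow> (f u, f v) \<in> snd D2))"

end

theory Submission
  imports Defs
begin

text \<open>Let \<open>\<Gamma>1\<close> and \<open>\<Gamma>2\<close> be the projections of \<open>\<Gamma>\<close> to the two coordinates. Every
  element of \<open>X \<times> Y\<close> acts on the coordinates separately, so the projections are arc-transitive
  under \<open>X\<close> and \<open>Y\<close>. Since \<open>X\<close> contains the identity, \<open>1 \<times> y\<close> is an automorphism
  of \<open>\<Gamma>\<close>; choosing \<open>y\<close> by arc-transitivity to move the second coordinates of one arc onto
  those of another shows that the arc set of \<open>\<Gamma>\<close> is the full tensor product of the projections.\<close>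

lemma perm_group_restrict_id:
  assumes "perm_group U X"
  shows "(\<lambda>x\<in>U. x) \<in> X"
proof -
  have "\<one>\<^bsub>BijGroup U\<^esub> \<in> X"
    using assms unfolding perm_group_def by (rule subgroup.one_closed)
  then show ?thesis by (simp add: BijGroup_def)
qed

lemma perm_group_bij_betw:
  assumes "perm_group U X" and "x \<in> X"
  shows "bij_betw x U U"
proof -
  have "x \<in> carrier (BijGroup U)"
    using assms unfolding perm_group_def by (meson subgroup.mem_carrier)
  then show ?thesis by (simp add: BijGroup_def Bij_def)
qed

lemma prod_action_memI:
  assumes "x \<in> X" and "y \<in> Y"
  shows "(\<lambda>(u, w). (x u, y w)) \<in> prod_action X Y"
  using assms unfolding prod_action_def by blast

lemma prod_action_lifts_fst:
  assumes "perm_group W Y" and "x \<in> X"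
  shows "\<exists>h\<in>prod_action X Y. \<forall>z\<in>U \<times> W. fst (h z) = x (fst z)"
proof
  show "(\<lambda>(u, w). (x u, (\<lambda>w\<in>W. w) w)) \<in> prod_action X Y"
    using prod_action_memI[OF assms(2) perm_group_restrict_id[OF assms(1)]] .
qed auto

lemma prod_action_lifts_snd:
  assumes "perm_group U X" and "y \<in> Y"
  shows "\<exists>h\<in>prod_action X Y. \<forall>z\<in>U \<times> W. snd (h z) = y (snd z)"
proof
  show "(\<lambda>(u, w). ((\<lambda>u\<in>U. u) u, y w)) \<in> prod_action X Y"
    using prod_action_memI[OF perm_group_restrict_id[OF assms(1)] assms(2)] .
qed auto

lemma arc_transitive_maps_arcs:
  assumes "is_digraph (V, A)" and "arc_transitive H (V, A)"
    and "h \<in> H" and "(a, b) \<in> A"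
  shows "(h a, h b) \<in> A"
  using assms unfolding is_digraph_def arc_transitive_def by fastforce

lemma arc_transitive_image:
  assumes dig: "is_digraph (V, A)" and at: "arc_transitive H (V, A)"
    and maps: "p ` V \<subseteq> V'"
    and bij: "\<forall>k\<in>K. bij_betw k V' V'"
    and lift: "\<forall>k\<in>K. \<exists>h\<in>H. \<forall>z\<in>V. p (h z) = k (p z)"
    and descend: "\<forall>h\<in>H. \<exists>k\<in>K. \<forall>z\<in>V. p (h z) = k (p z)"
  shows "is_digraph (V', map_prod p p ` A) \<and> arc_transitive K (V', map_prod p p ` A)"
proof -
  have arc_V: "a \<in> V" "b \<in> V" if "(a, b) \<in> A" for a b
    using dig that unfolding is_digraph_def by auto
  have "(u, v) \<in> map_prod p p ` A \<longleftrightarrow> (k u, k v) \<in> map_prod p p ` A"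
    if k: "k \<in> K" and uv: "u \<in> V'" "v \<in> V'" for k u v
  proof
    obtain h where h: "h \<in> H" "\<And>z. z \<in> V \<Longrightarrow> p (h z) = k (p z)"
      using lift k by blast
    {
      assume "(u, v) \<in> map_prod p p ` A"
      then obtain a b where ab: "(a, b) \<in> A" "u = p a" "v = p b" by auto
      then have "(h a, h b) \<in> A" using arc_transitive_maps_arcs[OF dig at h(1)] by blast
      then show "(k u, k v) \<in> map_prod p p ` A"
        by (rule rev_image_eqI) (simp add: ab h(2) arc_V[OF ab(1)])
    }
    {
      assume "(k u, k v) \<in> map_prod p p ` A"
      then obtain a b where ab: "(a, b) \<in> A" "k u = p a" "k v = p b" by auto
      have h_bij: "bij_betw h V V"
        using at h(1) unfolding arc_transitive_def by simp
      obtain a' b' where a'b': "a' \<in> V" "b' \<in> V" "h a' = a" "h b' = b"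
        using arc_V[OF ab(1)] bij_betw_imp_surj_on[OF h_bij] by (metis imageE)
      have "(a', b') \<in> A"
        using at h(1) a'b' ab(1) unfolding arc_transitive_def by auto
      moreover have "p a' = u" "p b' = v"
      proof -
        have "inj_on k V'" using bij k by (simp add: bij_betw_def)
        moreover have "k (p a') = k u" "k (p b') = k v"
          using h(2) a'b' ab by auto
        ultimately show "p a' = u" "p b' = v"
          using maps a'b' uv by (auto dest: inj_onD)
      qed
      ultimately show "(u, v) \<in> map_prod p p ` A"
        by (auto intro!: rev_image_eqI[of "(a', b')"])
    }
  qed
  moreover have "\<exists>k\<in>K. (k (fst e), k (snd e)) = f"
    if e: "e \<in> map_prod p p ` A" and f: "f \<in> map_prod p p ` A" for e f
  proof -
    obtain a b where ab: "(a, b) \<in> A" "e = (p a, p b)"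
      using e by auto
    obtain c d where cd: "(c, d) \<in> A" "f = (p c, p d)"
      using f by auto
    obtain h where "h \<in> H" "(h a, h b) = (c, d)"
      using at ab(1) cd(1) unfolding arc_transitive_def by fastforce
    moreover obtain k where "k \<in> K" "\<And>z. z \<in> V \<Longrightarrow> p (h z) = k (p z)"
      using descend \<open>h \<in> H\<close> by blast
    ultimately show ?thesis
      using ab cd arc_V[OF ab(1)] by auto
  qed
  moreover have "is_digraph (V', map_prod p p ` A)"
    using maps arc_V unfolding is_digraph_def by fastforce
  ultimately show ?thesis
    using bij unfolding arc_transitive_def by simp
qed

lemma prod_action_arcs_eq_tensor:
  assumes X: "perm_group U X"
    and dig: "is_digraph (U \<times> W, A)" and at: "arc_transitive (prod_action X Y) (U \<times> W, A)"
  shows "A = snd (tensor (U, map_prod fst fst ` A) (W, map_prod snd snd ` A))"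
proof
  show "A \<subseteq> snd (tensor (U, map_prod fst fst ` A) (W, map_prod snd snd ` A))"
    unfolding tensor_def by force
  show "snd (tensor (U, map_prod fst fst ` A) (W, map_prod snd snd ` A)) \<subseteq> A"
  proof
    fix e assume "e \<in> snd (tensor (U, map_prod fst fst ` A) (W, map_prod snd snd ` A))"
    then obtain u1 v1 w1 w2 u2 v2 s t where
      e: "e = ((u1, u2), (v1, v2))"
      and arc1: "((u1, w1), (v1, w2)) \<in> A" and arc2: "((s, u2), (t, v2)) \<in> A"
      unfolding tensor_def by fastforce
    obtain g where "g \<in> prod_action X Y" "(g (u1, w1), g (v1, w2)) = ((s, u2), (t, v2))"
      using at arc1 arc2 unfolding arc_transitive_def by fastforce
    then obtain y where y: "y \<in> Y" "y w1 = u2" "y w2 = v2"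
      unfolding prod_action_def by auto
    have "(\<lambda>(u, w). ((\<lambda>x\<in>U. x) u, y w)) \<in> prod_action X Y"
      using prod_action_memI[OF perm_group_restrict_id[OF X] y(1)] .
    from arc_transitive_maps_arcs[OF dig at this arc1]
    show "e \<in> A"
      using e y dig arc1 unfolding is_digraph_def by auto
  qed
qed

theorem lemma2p6:
  fixes U :: "'u set" and W :: "'w set"
    and X :: "('u \<Rightarrow> 'u) set" and Y :: "('w \<Rightarrow> 'w) set"
    and A :: "(('u \<times> 'w) \<times> ('u \<times> 'w)) set"
  assumes "perm_group U X" and "perm_group W Y"
    and "is_digraph (U \<times> W, A)"
    and "arc_transitive (prod_action X Y) (U \<times> W, A)"
  shows "\<exists>\<Gamma>1 \<Gamma>2. is_digraph \<Gamma>1 \<and> fst \<Gamma>1 = U \<and> arc_transitive X \<Gamma>1 \<and>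
           is_digraph \<Gamma>2 \<and> fst \<Gamma>2 = W \<and> arc_transitive Y \<Gamma>2 \<and>
           digraph_iso (U \<times> W, A) (tensor \<Gamma>1 \<Gamma>2)"
proof -
  have "is_digraph (U, map_prod fst fst ` A) \<and> arc_transitive X (U, map_prod fst fst ` A)"
  proof (rule arc_transitive_image[OF assms(3,4)])
    show "\<forall>x\<in>X. \<exists>h\<in>prod_action X Y. \<forall>z\<in>U \<times> W. fst (h z) = x (fst z)"
      using prod_action_lifts_fst[OF assms(2)] by blast
  qed (use perm_group_bij_betw[OF assms(1)] in \<open>auto simp: prod_action_def\<close>)
  moreover have "is_digraph (W, map_prod snd snd ` A) \<and> arc_transitive Y (W, map_prod snd snd ` A)"
  proof (rule arc_transitive_image[OF assms(3,4)])
    show "\<forall>y\<in>Y. \<exists>h\<in>prod_action X Y. \<forall>z\<in>U \<times> W. snd (h z) = y (snd z)"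
      using prod_action_lifts_snd[OF assms(1)] by blast
  qed (use perm_group_bij_betw[OF assms(2)] in \<open>auto simp: prod_action_def\<close>)
  moreover have "digraph_iso (U \<times> W, A) (tensor (U, map_prod fst fst ` A) (W, map_prod snd snd ` A))"
    using prod_action_arcs_eq_tensor[OF assms(1,3,4)]
    unfolding digraph_iso_def by (intro exI[of _ id]) (simp add: tensor_def)
  ultimately show ?thesis by fastforce
qed

end
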